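(* Let $n$ be a positive integer and $G$ a graph. If $G\in\operatorname{obs}(P_n)$, then $G$ is a cycle, or $G$ is a linear forest (a disjoint union of paths), or $G$ is isomorphic to one of the graphs $A$, $B$, $E$.
   Context: All graphs are finite, simple and loopless. $P_n$ denotes the path on $n$ vertices ($P_1=K_1$, $P_2=K_2$). A full-homomorphism $\varphi\colon G\to H$ is a map $V(G)\to V(H)$ such that for all $x,y\in V(G)$, $xy\in E(G)$ if and only if $\varphi(x)\varphi(y)\in E(H)$. A full $H$-colouring of $G$ is a full-homomorphism $G\to H$. A minimal $H$-obstruction is a graph $G$ that admits no full $H$-colouring while every proper induced subgraph of $G$ admits one; $\operatorname{obs}(H)$ denotes the set of minimal $H$-obstructions (up to isomorphism). The graphs $A$, $B$, $E$ have vertex set $\{v_0,\dots,v_5\}$ and edge sets: $E(A)=\{v_0v_1,v_1v_2,v_2v_3,v_3v_4,v_4v_5,v_1v_4\}$; $E(B)=E(A)\cup\{v_0v_5\}$; $E(E)=\{v_0v_1,v_1v_2,v_0v_5,v_1v_4,v_2v_3\}$. *)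

theory Defs
  imports Main
begin

type_synonym 'a graph = "'a set \<times> 'a set set"

definition verts :: "'a graph \<Rightarrow> 'a set" where "verts G = fst G"
definition edges :: "'a graph \<Rightarrow> 'a set set" where "edges G = snd G"

definition wf_graph :: "'a graph \<Rightarrow> bool" where
  "wf_graph G \<longleftrightarrow> finite (verts G) \<and> (\<forall>e\<in>edges G. e \<subseteq> verts G \<and> card e = 2)"

definition induced_subgraph :: "'a graph \<Rightarrow> 'a set \<Rightarrow> 'a graph" where
  "induced_subgraph G S = (S, {e \<in> edges G. e \<subseteq> S})"

definition full_hom :: "'a graph \<Rightarrow> 'b graph \<Rightarrow> ('a \<Rightarrow> 'b) \<Rightarrow> bool" where
  "full_hom G H \<phi> \<longleftrightarrow> \<phi> ` verts G \<subseteq> verts H \<and>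
     (\<forall>x\<in>verts G. \<forall>y\<in>verts G. {x, y} \<in> edges G \<longleftrightarrow> {\<phi> x, \<phi> y} \<in> edges H)"

definition full_colourable :: "'a graph \<Rightarrow> 'b graph \<Rightarrow> bool" where
  "full_colourable G H \<longleftrightarrow> (\<exists>\<phi>. full_hom G H \<phi>)"

definition minimal_obstruction :: "'b graph \<Rightarrow> 'a graph \<Rightarrow> bool" where
  "minimal_obstruction H G \<longleftrightarrow> wf_graph G \<and> \<not> full_colourable G H \<and>
     (\<forall>S. S \<subset> verts G \<longrightarrow> full_colourable (induced_subgraph G S) H)"

definition path_graph :: "nat \<Rightarrow> nat graph" where
  "path_graph n = ({0..<n}, {{i, Suc i} | i. Suc i < n})"

definition graph_iso :: "'a graph \<Rightarrow> 'b graph \<Rightarrow> bool" where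
  "graph_iso G H \<longleftrightarrow> (\<exists>f. bij_betw f (verts G) (verts H) \<and>
     (\<forall>x\<in>verts G. \<forall>y\<in>verts G. {x, y} \<in> edges G \<longleftrightarrow> {f x, f y} \<in> edges H))"

definition is_cycle :: "'a graph \<Rightarrow> bool" where
  "is_cycle G \<longleftrightarrow> (\<exists>k f. k \<ge> 3 \<and> bij_betw f {0..<k} (verts G) \<and>
     edges G = {{f i, f ((Suc i) mod k)} | i. i < k})"

definition is_linear_forest :: "'a graph \<Rightarrow> bool" where
  "is_linear_forest G \<longleftrightarrow> (\<exists>ps :: 'a list list.
     distinct (concat ps) \<and> set (concat ps) = verts G \<and> (\<forall>p\<in>set ps. p \<noteq> []) \<and>
     edges G = (\<Union>p\<in>set ps. {{p ! i, p ! Suc i} | i. Suc i < length p}))"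

definition graph_A :: "nat graph" where
  "graph_A = ({0..5}, {{0,1},{1,2},{2,3},{3,4},{4,5},{1,4}})"
definition graph_B :: "nat graph" where
  "graph_B = ({0..5}, {{0,1},{1,2},{2,3},{3,4},{4,5},{1,4},{0,5}})"
definition graph_E :: "nat graph" where
  "graph_E = ({0..5}, {{0,1},{1,2},{0,5},{1,4},{2,3}})"

end

theory Submission
  imports Defs
begin

text \<open>
  A full \<open>P\<^sub>n\<close>-colouring of a vertex set is a map into \<open>{0..<n}\<close> under which two vertices are
  adjacent exactly when their colours differ by one. Adjacent vertices therefore get colours of
  different parity, so no odd cycle is colourable; vertices of equal colour have the same
  neighbours; and a colouring extends to a twin of a coloured vertex. Consequently a minimal
  obstruction has no twins, and it contains a triangle (pentagon) only if it has at most three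
  (five) vertices.

  If some vertex \<open>v\<close> has three neighbours \<open>a, b, c\<close>, these are independent, and there are vertices
  \<open>d, e\<close> that together distinguish each pair among \<open>a, b, c\<close>. In a colouring of
  \<open>{v, a, b, c, d, e}\<close> two of \<open>a, b, c\<close> would share the colour next to that of \<open>v\<close>, so these six
  vertices are all of \<open>G\<close>; the excluded triangles and pentagons then leave only \<open>A\<close>, \<open>B\<close> and \<open>E\<close>.

  Otherwise every vertex has degree at most two. In a colouring of a proper subset, a vertex of
  maximal colour, or one of its two lower neighbours, has at most one neighbour in the subset
  (otherwise two vertices would be twins). Adding such vertices one at a time builds \<open>G\<close> as a union
  of vertex-disjoint paths; if instead every vertex has degree two, the same works for \<open>G\<close> minus a
  vertex \<open>x\<close>, and \<open>x\<close> closes the single resulting path into a cycle.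
\<close>

section \<open>Colourings by a path\<close>

definition adj :: "'a graph \<Rightarrow> 'a \<Rightarrow> 'a \<Rightarrow> bool" where
  "adj G x y \<longleftrightarrow> {x, y} \<in> edges G"

lemma adj_sym: "adj G x y = adj G y x"
  by (simp add: adj_def insert_commute)

lemma adj_irrefl: "wf_graph G \<Longrightarrow> \<not> adj G x x"
  by (auto simp: adj_def wf_graph_def)

lemma adj_in_verts: "wf_graph G \<Longrightarrow> adj G x y \<Longrightarrow> x \<in> verts G \<and> y \<in> verts G"
  by (auto simp: adj_def wf_graph_def)

lemma edges_adjE:
  assumes "wf_graph G" "e \<in> edges G"
  obtains x y where "e = {x, y}" "adj G x y"
  using assms unfolding wf_graph_def adj_def by (metis card_2_iff)

definition path_colouring :: "nat \<Rightarrow> 'a graph \<Rightarrow> 'a set \<Rightarrow> ('a \<Rightarrow> nat) \<Rightarrow> bool" where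
  "path_colouring n G S \<phi> \<longleftrightarrow> \<phi> ` S \<subseteq> {0..<n} \<and>
     (\<forall>x\<in>S. \<forall>y\<in>S. adj G x y \<longleftrightarrow> \<phi> y = Suc (\<phi> x) \<or> \<phi> x = Suc (\<phi> y))"

definition path_colourable :: "nat \<Rightarrow> 'a graph \<Rightarrow> 'a set \<Rightarrow> bool" where
  "path_colourable n G S \<longleftrightarrow> (\<exists>\<phi>. path_colouring n G S \<phi>)"

lemma full_hom_induced_path_graph_iff:
  "full_hom (induced_subgraph G S) (path_graph n) \<phi> \<longleftrightarrow> path_colouring n G S \<phi>"
proof -
  have edge_iff: "{a, b} \<in> edges (path_graph n) \<longleftrightarrow> b = Suc a \<or> a = Suc b"
    if "a < n" "b < n" for a b
    using that by (auto simp: path_graph_def edges_def doubleton_eq_iff)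
  have "verts (path_graph n) = {0..<n}" "verts (induced_subgraph G S) = S"
    "\<And>x y. x \<in> S \<Longrightarrow> y \<in> S \<Longrightarrow> {x, y} \<in> edges (induced_subgraph G S) \<longleftrightarrow> adj G x y"
    by (auto simp: path_graph_def induced_subgraph_def verts_def edges_def adj_def)
  then show ?thesis
    unfolding full_hom_def path_colouring_def using edge_iff
    by (auto simp: image_subset_iff simp del: atLeastLessThan_iff) (metis atLeastLessThan_iff)+
qed

lemma path_colouring_adj:
  "path_colouring n G S \<phi> \<Longrightarrow> x \<in> S \<Longrightarrow> y \<in> S \<Longrightarrow>
     adj G x y \<longleftrightarrow> \<phi> y = Suc (\<phi> x) \<or> \<phi> x = Suc (\<phi> y)"
  by (simp add: path_colouring_def)

lemma path_colouring_adj_odd: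
  "path_colouring n G S \<phi> \<Longrightarrow> x \<in> S \<Longrightarrow> y \<in> S \<Longrightarrow> adj G x y \<Longrightarrow> odd (\<phi> x + \<phi> y)"
  by (auto simp: path_colouring_adj)

lemma path_colouring_same_colour:
  "path_colouring n G S \<phi> \<Longrightarrow> x \<in> S \<Longrightarrow> y \<in> S \<Longrightarrow> z \<in> S \<Longrightarrow> \<phi> x = \<phi> y \<Longrightarrow>
     adj G z x = adj G z y"
  by (simp add: path_colouring_adj)

lemma path_colourable_no_triangle:
  assumes "path_colourable n G S" "x \<in> S" "y \<in> S" "z \<in> S"
    and "adj G x y" "adj G y z" "adj G z x"
  shows False
proof -
  obtain \<phi> where \<phi>: "path_colouring n G S \<phi>"
    using assms(1) by (auto simp: path_colourable_def)
  have "odd (\<phi> x + \<phi> y)" "odd (\<phi> y + \<phi> z)" "odd (\<phi> z + \<phi> x)"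
    using assms(2-) path_colouring_adj_odd[OF \<phi>] by blast+
  then show False by (simp add: odd_add)
qed

lemma path_colourable_no_pentagon:
  assumes "path_colourable n G S" "x1 \<in> S" "x2 \<in> S" "x3 \<in> S" "x4 \<in> S" "x5 \<in> S"
    and "adj G x1 x2" "adj G x2 x3" "adj G x3 x4" "adj G x4 x5" "adj G x5 x1"
  shows False
proof -
  obtain \<phi> where \<phi>: "path_colouring n G S \<phi>"
    using assms(1) by (auto simp: path_colourable_def)
  have "odd (\<phi> x1 + \<phi> x2)" "odd (\<phi> x2 + \<phi> x3)" "odd (\<phi> x3 + \<phi> x4)"
    "odd (\<phi> x4 + \<phi> x5)" "odd (\<phi> x5 + \<phi> x1)"
    using assms(2-) path_colouring_adj_odd[OF \<phi>] by blast+
  then show False by (simp add: odd_add)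
qed

lemma path_colouring_insert_twin:
  assumes "wf_graph G" "path_colouring n G S \<phi>" "x \<in> S"
    and twin: "\<And>z. z \<in> insert y S \<Longrightarrow> adj G z x = adj G z y"
  shows "path_colouring n G (insert y S) (\<phi>(y := \<phi> x))"
proof -
  define r where "r u = (if u = y then x else u)" for u
  have r: "r u \<in> S" "(\<phi>(y := \<phi> x)) u = \<phi> (r u)" if "u \<in> insert y S" for u
    using that \<open>x \<in> S\<close> by (auto simp: r_def)
  have "adj G u w = adj G (r u) (r w)" if "u \<in> insert y S" "w \<in> insert y S" for u w
  proof -
    have "adj G u y = adj G u x" "adj G y w = adj G x w"
      using twin[OF that(1)] twin[OF that(2)] by (simp_all add: adj_sym)
    then show ?thesis
      using adj_irrefl[OF \<open>wf_graph G\<close>] by (auto simp: r_def)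
  qed
  then show ?thesis
    using assms(2) r unfolding path_colouring_def by (simp add: image_subset_iff)
qed

section \<open>Minimal obstructions\<close>

lemma induced_subgraph_verts: "wf_graph G \<Longrightarrow> induced_subgraph G (verts G) = G"
  by (cases G) (auto simp: induced_subgraph_def wf_graph_def verts_def edges_def)

lemma minimal_obstruction_path_graphD:
  assumes "minimal_obstruction (path_graph n) G"
  shows "wf_graph G" "\<not> path_colourable n G (verts G)"
    and "S \<subset> verts G \<Longrightarrow> path_colourable n G S"
proof -
  have "full_colourable (induced_subgraph G S) (path_graph n) \<longleftrightarrow> path_colourable n G S" for S
    by (simp add: full_colourable_def path_colourable_def full_hom_induced_path_graph_iff)
  then show "wf_graph G" "\<not> path_colourable n G (verts G)"
    and "S \<subset> verts G \<Longrightarrow> path_colourable n G S"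
    using assms induced_subgraph_verts[of G] by (metis minimal_obstruction_def)+
qed

lemma minimal_obstruction_verts_nonempty:
  "minimal_obstruction (path_graph n) G \<Longrightarrow> verts G \<noteq> {}"
proof
  assume "verts G = {}"
  then have "path_colourable n G (verts G)"
    by (simp add: path_colourable_def path_colouring_def)
  then show "minimal_obstruction (path_graph n) G \<Longrightarrow> False"
    using minimal_obstruction_path_graphD(2) by blast
qed

lemma minimal_obstruction_no_twins:
  assumes mo: "minimal_obstruction (path_graph n) G"
    and "x \<in> verts G" "y \<in> verts G" "x \<noteq> y"
  shows "\<exists>z\<in>verts G. adj G z x \<noteq> adj G z y"
proof (rule ccontr)
  assume "\<not> ?thesis"
  then have twin: "\<And>z. z \<in> insert y (verts G - {y}) \<Longrightarrow> adj G z x = adj G z y"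
    using \<open>y \<in> verts G\<close> by blast
  obtain \<phi> where "path_colouring n G (verts G - {y}) \<phi>"
    using minimal_obstruction_path_graphD(3)[OF mo, of "verts G - {y}"] \<open>y \<in> verts G\<close>
    by (auto simp: path_colourable_def)
  from path_colouring_insert_twin[OF minimal_obstruction_path_graphD(1)[OF mo] this _ twin]
  have "path_colourable n G (verts G)"
    using assms(2-4) insert_Diff[OF \<open>y \<in> verts G\<close>] by (auto simp: path_colourable_def)
  then show False using minimal_obstruction_path_graphD(2)[OF mo] by blast
qed

lemma minimal_obstruction_triangle:
  assumes mo: "minimal_obstruction (path_graph n) G"
    and "adj G x y" "adj G y z" "adj G z x"
  shows "card (verts G) \<le> 3"
proof (rule ccontr)
  assume "\<not> card (verts G) \<le> 3"
  moreover have "{x, y, z} \<subseteq> verts G"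
    using assms(2-) adj_in_verts[OF minimal_obstruction_path_graphD(1)[OF mo]] by blast
  ultimately have "{x, y, z} \<subset> verts G"
    using card_length[of "[x, y, z]"] by auto
  then have "path_colourable n G {x, y, z}"
    by (rule minimal_obstruction_path_graphD(3)[OF mo])
  then show False
    by (rule path_colourable_no_triangle[of n G _ x y z]) (use assms in auto)
qed

lemma minimal_obstruction_pentagon:
  assumes mo: "minimal_obstruction (path_graph n) G"
    and "adj G x1 x2" "adj G x2 x3" "adj G x3 x4" "adj G x4 x5" "adj G x5 x1"
  shows "card (verts G) \<le> 5"
proof (rule ccontr)
  assume "\<not> card (verts G) \<le> 5"
  moreover have "{x1, x2, x3, x4, x5} \<subseteq> verts G"
    using assms(2-) adj_in_verts[OF minimal_obstruction_path_graphD(1)[OF mo]] by blast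
  ultimately have "{x1, x2, x3, x4, x5} \<subset> verts G"
    using card_length[of "[x1, x2, x3, x4, x5]"] by auto
  then have "path_colourable n G {x1, x2, x3, x4, x5}"
    by (rule minimal_obstruction_path_graphD(3)[OF mo])
  then show False
    by (rule path_colourable_no_pentagon[of n G _ x1 x2 x3 x4 x5]) (use assms in auto)
qed

section \<open>A vertex of degree three\<close>

lemma graph_iso_by_enumeration:
  assumes "verts G = set xs" "distinct xs" "verts H = {0..<length xs}"
    and "\<forall>i<length xs. \<forall>j<length xs. adj G (xs ! i) (xs ! j) \<longleftrightarrow> {i, j} \<in> edges H"
  shows "graph_iso G H"
proof -
  have nth: "bij_betw ((!) xs) {0..<length xs} (set xs)"
    using bij_betw_nth[OF \<open>distinct xs\<close>] atLeast0LessThan by blast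
  define f where "f = inv_into {0..<length xs} ((!) xs)"
  have f: "bij_betw f (set xs) {0..<length xs}"
    unfolding f_def by (rule bij_betw_inv_into[OF nth])
  have "xs ! f x = x" "f x < length xs" if "x \<in> set xs" for x
    using bij_betw_inv_into_right[OF nth that] bij_betwE[OF f] that by (auto simp: f_def)
  then show ?thesis
    unfolding graph_iso_def using assms f by (intro exI[of _ f]) (metis adj_def)
qed

lemma minimal_obstruction_claw_triangle_free:
  assumes mo: "minimal_obstruction (path_graph n) G"
    and claw: "adj G v a" "adj G v b" "adj G v c" "a \<noteq> b" "a \<noteq> c" "b \<noteq> c"
    and triangle: "adj G x y" "adj G y z" "adj G z x"
  shows False
proof -
  have wf: "wf_graph G" by (rule minimal_obstruction_path_graphD(1)[OF mo])
  have "v \<notin> {a, b, c}"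
    using claw adj_irrefl[OF wf] by auto
  then have "{v, a, b, c} \<subseteq> verts G" "card {v, a, b, c} = 4"
    using claw adj_in_verts[OF wf] by auto
  moreover have "finite (verts G)"
    using wf by (simp add: wf_graph_def)
  ultimately have "4 \<le> card (verts G)"
    by (metis card_mono)
  then show False using minimal_obstruction_triangle[OF mo triangle] by simp
qed

lemma minimal_obstruction_claw_separators_span:
  assumes mo: "minimal_obstruction (path_graph n) G"
    and claw: "adj G v a" "adj G v b" "adj G v c"
    and "d \<in> verts G" "e \<in> verts G"
    and sep: "adj G d a \<noteq> adj G d b \<or> adj G e a \<noteq> adj G e b"
      "adj G d a \<noteq> adj G d c \<or> adj G e a \<noteq> adj G e c"
      "adj G d b \<noteq> adj G d c \<or> adj G e b \<noteq> adj G e c"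
  shows "verts G = {v, a, b, c, d, e}"
proof (rule ccontr)
  let ?S = "{v, a, b, c, d, e}"
  have "?S \<subseteq> verts G"
    using assms(2-6) adj_in_verts[OF minimal_obstruction_path_graphD(1)[OF mo]] by blast
  moreover assume "verts G \<noteq> ?S"
  ultimately obtain \<phi> where \<phi>: "path_colouring n G ?S \<phi>"
    using minimal_obstruction_path_graphD(3)[OF mo, of ?S] by (auto simp: path_colourable_def)
  have "\<phi> a = Suc (\<phi> v) \<or> \<phi> v = Suc (\<phi> a)" "\<phi> b = Suc (\<phi> v) \<or> \<phi> v = Suc (\<phi> b)"
    "\<phi> c = Suc (\<phi> v) \<or> \<phi> v = Suc (\<phi> c)"
    using claw path_colouring_adj[OF \<phi>] by simp_all
  then have "\<phi> a = \<phi> b \<or> \<phi> a = \<phi> c \<or> \<phi> b = \<phi> c"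
    by linarith
  moreover have "adj G z x = adj G z y" if "\<phi> x = \<phi> y" "x \<in> {a, b, c}" "y \<in> {a, b, c}" "z \<in> {d, e}"
    for x y z
    using path_colouring_same_colour[OF \<phi> _ _ _ that(1)] that(2-) by blast
  ultimately show False
    using sep by blast
qed

lemma minimal_obstruction_claw_pendant_separator:
  assumes mo: "minimal_obstruction (path_graph n) G"
    and claw: "adj G v a" "adj G v b" "adj G v c" "a \<noteq> b" "a \<noteq> c" "b \<noteq> c"
    and d: "adj G d a" "\<not> adj G d b" "\<not> adj G d c"
    and e: "adj G e b" "\<not> adj G e c"
  shows "graph_iso G graph_A \<or> graph_iso G graph_E"
proof -
  have wf: "wf_graph G" by (rule minimal_obstruction_path_graphD(1)[OF mo])
  note triangle_free = minimal_obstruction_claw_triangle_free[OF mo claw]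
  have independent: "\<not> adj G a b" "\<not> adj G a c" "\<not> adj G b c" "\<not> adj G v d" "\<not> adj G v e"
    using triangle_free[of v a b] triangle_free[of v a c] triangle_free[of v b c]
      triangle_free[of v a d] triangle_free[of v b e] claw d e
    by (auto simp: adj_sym)
  have six: "distinct [v, a, b, c, d, e]"
    using claw d e independent adj_irrefl[OF wf] by (auto simp: adj_sym)
  have V: "verts G = {v, a, b, c, d, e}"
    using d e claw adj_in_verts[OF wf]
    by (intro minimal_obstruction_claw_separators_span[OF mo claw(1-3)]) auto
  then have card: "card (verts G) = 6"
    using distinct_card[OF six] by simp
  show ?thesis
  proof (cases "adj G e a")
    case True
    then have "\<not> adj G d e" using triangle_free[of a d e] d by (auto simp: adj_sym)
    then have "graph_iso G graph_A"
      using V six claw d e independent \<open>adj G e a\<close> adj_irrefl[OF wf]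
      by (intro graph_iso_by_enumeration[of _ "[c, v, b, e, a, d]"])
        (auto simp: graph_A_def verts_def edges_def numeral_eq_Suc All_less_Suc2 adj_sym doubleton_eq_iff)
    then show ?thesis ..
  next
    case False
    then have "\<not> adj G d e"
      using minimal_obstruction_pentagon[OF mo, of v a d e b] claw d e card by (auto simp: adj_sym)
    then have "graph_iso G graph_E"
      using V six claw d e independent \<open>\<not> adj G e a\<close> adj_irrefl[OF wf]
      by (intro graph_iso_by_enumeration[of _ "[a, v, b, e, c, d]"])
        (auto simp: graph_E_def verts_def edges_def numeral_eq_Suc All_less_Suc2 adj_sym doubleton_eq_iff)
    then show ?thesis ..
  qed
qed

lemma minimal_obstruction_claw_bridging_separator:
  assumes mo: "minimal_obstruction (path_graph n) G"
    and claw: "adj G v a" "adj G v b" "adj G v c" "a \<noteq> b" "a \<noteq> c" "b \<noteq> c"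
    and d: "adj G d a" "\<not> adj G d b" "adj G d c"
    and e: "adj G e a" "\<not> adj G e c"
  shows "graph_iso G graph_A \<or> graph_iso G graph_B"
proof -
  have wf: "wf_graph G" by (rule minimal_obstruction_path_graphD(1)[OF mo])
  note triangle_free = minimal_obstruction_claw_triangle_free[OF mo claw]
  have independent:
    "\<not> adj G a b" "\<not> adj G a c" "\<not> adj G b c" "\<not> adj G v d" "\<not> adj G v e" "\<not> adj G d e"
    using triangle_free[of v a b] triangle_free[of v a c] triangle_free[of v b c]
      triangle_free[of v a d] triangle_free[of v a e] triangle_free[of a d e] claw d e
    by (auto simp: adj_sym)
  have six: "distinct [v, a, b, c, d, e]"
    using claw d e independent adj_irrefl[OF wf] by (auto simp: adj_sym)
  have V: "verts G = {v, a, b, c, d, e}"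
    using d e claw adj_in_verts[OF wf]
    by (intro minimal_obstruction_claw_separators_span[OF mo claw(1-3)]) auto
  show ?thesis
  proof (cases "adj G e b")
    case True
    then have "graph_iso G graph_B"
      using V six claw d e independent adj_irrefl[OF wf]
      by (intro graph_iso_by_enumeration[of _ "[b, v, c, d, a, e]"])
        (auto simp: graph_B_def verts_def edges_def numeral_eq_Suc All_less_Suc2 adj_sym doubleton_eq_iff)
    then show ?thesis ..
  next
    case False
    then have "graph_iso G graph_A"
      using V six claw d e independent adj_irrefl[OF wf]
      by (intro graph_iso_by_enumeration[of _ "[b, v, c, d, a, e]"])
        (auto simp: graph_A_def verts_def edges_def numeral_eq_Suc All_less_Suc2 adj_sym doubleton_eq_iff)
    then show ?thesis ..
  qed
qed

lemma minimal_obstruction_claw_separated: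
  assumes mo: "minimal_obstruction (path_graph n) G"
    and claw: "adj G v a" "adj G v b" "adj G v c" "a \<noteq> b" "a \<noteq> c" "b \<noteq> c"
    and d: "adj G d a" "\<not> adj G d b"
  shows "graph_iso G graph_A \<or> graph_iso G graph_B \<or> graph_iso G graph_E"
proof -
  have wf: "wf_graph G" by (rule minimal_obstruction_path_graphD(1)[OF mo])
  note no_twins = minimal_obstruction_no_twins[OF mo adj_in_verts[OF wf, THEN conjunct2]
      adj_in_verts[OF wf, THEN conjunct2]]
  show ?thesis
  proof (cases "adj G d c")
    case True
    obtain e where "adj G e a \<noteq> adj G e c"
      using no_twins[OF claw(1) claw(3) claw(5)] by blast
    then consider "adj G e a" "\<not> adj G e c" | "adj G e c" "\<not> adj G e a" by blast
    then show ?thesis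
    proof cases
      case 1
      then show ?thesis
        using minimal_obstruction_claw_bridging_separator[OF mo claw d(1,2) True] by blast
    next
      case 2
      then show ?thesis
        using minimal_obstruction_claw_bridging_separator[OF mo claw(3,2,1) _ _ _ True d(2,1)] claw(4-6)
        by auto
    qed
  next
    case False
    obtain e where "adj G e b \<noteq> adj G e c"
      using no_twins[OF claw(2) claw(3) claw(6)] by blast
    then consider "adj G e b" "\<not> adj G e c" | "adj G e c" "\<not> adj G e b" by blast
    then show ?thesis
    proof cases
      case 1
      then show ?thesis
        using minimal_obstruction_claw_pendant_separator[OF mo claw d False] by blast
    next
      case 2
      then show ?thesis
        using minimal_obstruction_claw_pendant_separator[OF mo claw(1,3,2) _ _ _ d(1) False d(2)]
          claw(4-6) by auto
    qed
  qed
qed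

lemma minimal_obstruction_claw:
  assumes mo: "minimal_obstruction (path_graph n) G"
    and claw: "adj G v a" "adj G v b" "adj G v c" "a \<noteq> b" "a \<noteq> c" "b \<noteq> c"
  shows "graph_iso G graph_A \<or> graph_iso G graph_B \<or> graph_iso G graph_E"
proof -
  have wf: "wf_graph G" by (rule minimal_obstruction_path_graphD(1)[OF mo])
  obtain d where "adj G d a \<noteq> adj G d b"
    using minimal_obstruction_no_twins[OF mo _ _ claw(4)] claw(1,2) adj_in_verts[OF wf] by blast
  then consider "adj G d a" "\<not> adj G d b" | "adj G d b" "\<not> adj G d a" by blast
  then show ?thesis
  proof cases
    case 1
    then show ?thesis by (rule minimal_obstruction_claw_separated[OF mo claw])
  next
    case 2
    then show ?thesis
      using minimal_obstruction_claw_separated[OF mo claw(2,1,3) _ _ _ 2] claw(4-6) by auto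
  qed
qed

section \<open>Maximum degree two\<close>

definition max_degree_le_two :: "'a graph \<Rightarrow> bool" where
  "max_degree_le_two G \<longleftrightarrow>
     (\<forall>v x y z. adj G v x \<longrightarrow> adj G v y \<longrightarrow> adj G v z \<longrightarrow> x = y \<or> x = z \<or> y = z)"

definition at_most_one_neighbour :: "'a graph \<Rightarrow> 'a set \<Rightarrow> 'a \<Rightarrow> bool" where
  "at_most_one_neighbour G S u \<longleftrightarrow> (\<forall>y\<in>S. \<forall>z\<in>S. adj G u y \<longrightarrow> adj G u z \<longrightarrow> y = z)"

lemma max_degree_le_two_common_neighbours:
  assumes "max_degree_le_two G" "adj G u p" "adj G u q" "adj G r p" "adj G r q" "p \<noteq> q"
  shows "adj G t u \<longleftrightarrow> adj G t r"
proof -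
  have nbrs: "t = p \<or> t = q" if "adj G w p" "adj G w q" "adj G t w" for w
    using assms(1,6) that adj_sym[of G t w] unfolding max_degree_le_two_def by blast
  have "adj G p u" "adj G q u" "adj G p r" "adj G q r"
    using assms(2-5) by (simp_all add: adj_sym)
  then show ?thesis
    using nbrs[OF assms(2,3)] nbrs[OF assms(4,5)] by blast
qed

lemma minimal_obstruction_low_vertex:
  assumes mo: "minimal_obstruction (path_graph n) G" and deg: "max_degree_le_two G"
    and "S \<subset> verts G" "S \<noteq> {}"
  shows "\<exists>u\<in>S. at_most_one_neighbour G S u"
proof -
  obtain \<phi> where \<phi>: "path_colouring n G S \<phi>"
    using minimal_obstruction_path_graphD(3)[OF mo \<open>S \<subset> verts G\<close>]
    by (auto simp: path_colourable_def)
  have "finite S"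
    using minimal_obstruction_path_graphD(1)[OF mo] \<open>S \<subset> verts G\<close>
    by (auto simp: wf_graph_def intro: finite_subset)
  moreover have "Max (\<phi> ` S) \<in> \<phi> ` S"
    using \<open>finite S\<close> \<open>S \<noteq> {}\<close> by simp
  then obtain u where u: "u \<in> S" "\<phi> u = Max (\<phi> ` S)"
    by (metis imageE)
  ultimately have u_max: "\<phi> w \<le> \<phi> u" if "w \<in> S" for w
    using that by simp
  show ?thesis
  proof (cases "at_most_one_neighbour G S u")
    case False
    then obtain p q where pq: "p \<in> S" "q \<in> S" "adj G u p" "adj G u q" "p \<noteq> q"
      by (auto simp: at_most_one_neighbour_def)
    \<comment> \<open>both neighbours of a vertex of maximal colour get the colour below it\<close>
    have "\<phi> u = Suc (\<phi> p)" "\<phi> u = Suc (\<phi> q)"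
      using path_colouring_adj[OF \<phi> u(1) pq(1)] path_colouring_adj[OF \<phi> u(1) pq(2)]
        pq(3,4) u_max[OF pq(1)] u_max[OF pq(2)] by auto
    then have "\<phi> p = \<phi> q" by simp
    have "at_most_one_neighbour G S p"
      unfolding at_most_one_neighbour_def
    proof (intro ballI impI, rule ccontr)
      fix y z assume yz: "y \<in> S" "z \<in> S" "adj G p y" "adj G p z" "y \<noteq> z"
      obtain r where "r \<in> {y, z}" "r \<noteq> u"
        using yz(5) by blast
      then have r: "r \<in> S" "adj G p r" "r \<noteq> u"
        using yz(1-4) by auto
      then have "adj G q r"
        using path_colouring_same_colour[OF \<phi> pq(1,2) r(1) \<open>\<phi> p = \<phi> q\<close>] by (simp add: adj_sym)
      then have "adj G t u \<longleftrightarrow> adj G t r" for t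
        using max_degree_le_two_common_neighbours[OF deg pq(3,4) _ _ pq(5)] r(2) by (simp add: adj_sym)
      then show False
        using minimal_obstruction_no_twins[OF mo, of u r] r u(1) \<open>S \<subset> verts G\<close> by blast
    qed
    then show ?thesis using pq(1) by blast
  qed (use u(1) in blast)
qed

definition path_edges :: "'a list \<Rightarrow> 'a set set" where
  "path_edges p = {{p ! i, p ! Suc i} | i. Suc i < length p}"

definition path_partition :: "'a graph \<Rightarrow> 'a set \<Rightarrow> 'a list list \<Rightarrow> bool" where
  "path_partition G T ps \<longleftrightarrow> distinct (concat ps) \<and> set (concat ps) = T \<and> (\<forall>p\<in>set ps. p \<noteq> []) \<and>
     {e \<in> edges G. e \<subseteq> T} = (\<Union>p\<in>set ps. path_edges p)"

lemma path_edges_Cons: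
  assumes "p \<noteq> []" shows "path_edges (u # p) = insert {u, hd p} (path_edges p)"
proof (intro set_eqI iffI)
  fix e assume "e \<in> path_edges (u # p)"
  then obtain i where i: "e = {(u # p) ! i, (u # p) ! Suc i}" "Suc i < Suc (length p)"
    by (auto simp: path_edges_def)
  then show "e \<in> insert {u, hd p} (path_edges p)"
    using \<open>p \<noteq> []\<close> by (cases i) (auto simp: hd_conv_nth path_edges_def)
next
  fix e assume "e \<in> insert {u, hd p} (path_edges p)"
  then consider "e = {u, hd p}" | j where "e = {p ! j, p ! Suc j}" "Suc j < length p"
    by (auto simp: path_edges_def)
  then show "e \<in> path_edges (u # p)"
  proof cases
    case 1
    then show ?thesis using \<open>p \<noteq> []\<close>
      unfolding path_edges_def by (intro CollectI exI[of _ 0]) (simp add: hd_conv_nth)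
  next
    case 2
    then show ?thesis
      unfolding path_edges_def by (intro CollectI exI[of _ "Suc j"]) simp
  qed
qed

lemma path_edges_rev: "path_edges (rev p) = path_edges p"
proof -
  have "path_edges (rev q) \<subseteq> path_edges q" for q :: "'a list"
  proof
    fix e assume "e \<in> path_edges (rev q)"
    then obtain i where i: "e = {rev q ! i, rev q ! Suc i}" "Suc i < length q"
      by (auto simp: path_edges_def)
    then have "e = {q ! (length q - Suc (Suc i)), q ! Suc (length q - Suc (Suc i))}"
      by (auto simp: rev_nth Suc_diff_Suc)
    then show "e \<in> path_edges q"
      using i(2) unfolding path_edges_def by force
  qed
  from this[of p] this[of "rev p"] show ?thesis by simp
qed

lemma distinct_concat_nth_eq:
  assumes "distinct (concat ps)" "p \<in> set ps" "q \<in> set ps"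
    and "i < length p" "j < length q" "p ! i = q ! j"
  shows "p = q \<and> i = j"
proof -
  have "p = q"
  proof (rule ccontr)
    assume "p \<noteq> q"
    then have "set p \<inter> set q = {}"
      using assms(1-3) by (simp add: distinct_concat_iff)
    then show False
      using assms(4-6) by (metis disjoint_iff nth_mem)
  qed
  moreover have "distinct p"
    using assms(1,2) by (simp add: distinct_concat_iff)
  ultimately show ?thesis
    using assms(4-6) by (simp add: nth_eq_iff_index_eq)
qed

lemma path_partition_neighbour:
  assumes part: "path_partition G T ps" and "p \<in> set ps" "i < length p" "w \<in> T" "adj G (p ! i) w"
  shows "(0 < i \<and> w = p ! (i - 1)) \<or> (Suc i < length p \<and> w = p ! Suc i)"
proof -
  have dist: "distinct (concat ps)"
    using part by (simp add: path_partition_def)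
  have "p ! i \<in> T"
    using part assms(2,3) nth_mem by (fastforce simp: path_partition_def)
  then have "{p ! i, w} \<in> (\<Union>q\<in>set ps. path_edges q)"
    using part assms(4,5) by (auto simp: path_partition_def adj_def)
  then obtain q j where q: "q \<in> set ps" "Suc j < length q" "{p ! i, w} = {q ! j, q ! Suc j}"
    by (auto simp: path_edges_def)
  then consider "p ! i = q ! j" "w = q ! Suc j" | "p ! i = q ! Suc j" "w = q ! j"
    by (auto simp: doubleton_eq_iff)
  then show ?thesis
  proof cases
    case 1
    then show ?thesis
      using distinct_concat_nth_eq[OF dist assms(2) q(1) assms(3) _ 1(1)] q(2) by auto
  next
    case 2
    then show ?thesis
      using distinct_concat_nth_eq[OF dist assms(2) q(1) assms(3) q(2) 2(1)] by auto
  qed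
qed

lemma edges_within_insert:
  assumes "wf_graph G"
  shows "{e \<in> edges G. e \<subseteq> insert u T} = {e \<in> edges G. e \<subseteq> T} \<union> {{u, w} | w. w \<in> T \<and> adj G u w}"
proof (intro set_eqI iffI)
  fix e assume e: "e \<in> {e \<in> edges G. e \<subseteq> insert u T}"
  then obtain x y where xy: "e = {x, y}" "adj G x y"
    using edges_adjE[OF assms] by blast
  then have "x \<noteq> y" using adj_irrefl[OF assms] by blast
  then show "e \<in> {e \<in> edges G. e \<subseteq> T} \<union> {{u, w} | w. w \<in> T \<and> adj G u w}"
    using e xy by (auto simp: adj_sym insert_commute)
qed (auto simp: adj_def)

lemma path_partition_insert_isolated:
  assumes "wf_graph G" "path_partition G T ps" "u \<notin> T" "\<forall>w\<in>T. \<not> adj G u w"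
  shows "path_partition G (insert u T) ([u] # ps)"
  using assms edges_within_insert[OF assms(1), of u T]
  by (auto simp: path_partition_def path_edges_def)

lemma path_partition_rev:
  "path_partition G T (xs @ p # ys) \<Longrightarrow> path_partition G T (xs @ rev p # ys)"
  by (auto simp: path_partition_def path_edges_rev)

lemma path_partition_insert_hd:
  assumes "wf_graph G" and part: "path_partition G T (xs @ p # ys)" and "u \<notin> T"
    and "adj G u (hd p)" "\<forall>w\<in>T. adj G u w \<longrightarrow> w = hd p"
  shows "path_partition G (insert u T) (xs @ (u # p) # ys)"
proof -
  have "p \<noteq> []" "set p \<subseteq> T"
    using part by (auto simp: path_partition_def)
  then have "hd p \<in> T" by auto
  then have "{{u, w} | w. w \<in> T \<and> adj G u w} = {{u, hd p}}"
    using assms(4,5) by blast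
  then have "{e \<in> edges G. e \<subseteq> insert u T} = insert {u, hd p} {e \<in> edges G. e \<subseteq> T}"
    using edges_within_insert[OF assms(1), of u T] by auto
  with part show ?thesis
    using \<open>u \<notin> T\<close> path_edges_Cons[OF \<open>p \<noteq> []\<close>, of u]
    unfolding path_partition_def by auto
qed

lemma path_partition_adj:
  assumes "path_partition G T ps" "p \<in> set ps" "Suc i < length p"
  shows "adj G (p ! i) (p ! Suc i)"
proof -
  have "{p ! i, p ! Suc i} \<in> path_edges p"
    using assms(3) by (auto simp: path_edges_def)
  then show ?thesis
    using assms(1,2) unfolding path_partition_def adj_def by blast
qed

lemma path_partition_insert_leaf:
  assumes wf: "wf_graph G" and deg: "max_degree_le_two G" and part: "path_partition G T ps"
    and "u \<notin> T" "w \<in> T" "adj G u w" and unique: "\<forall>w'\<in>T. adj G u w' \<longrightarrow> w' = w"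
  shows "\<exists>ps'. path_partition G (insert u T) ps'"
proof -
  have "w \<in> set (concat ps)"
    using part \<open>w \<in> T\<close> by (simp add: path_partition_def)
  then obtain p i where p: "p \<in> set ps" "i < length p" "p ! i = w"
    by (metis in_set_conv_nth set_concat UN_E)
  then obtain xs ys where ps: "ps = xs @ p # ys"
    by (meson split_list)
  \<comment> \<open>w already has the neighbour u outside T, so it is an end of its path\<close>
  have "i = 0 \<or> Suc i = length p"
  proof (rule ccontr)
    assume "\<not> (i = 0 \<or> Suc i = length p)"
    then have i: "0 < i" "Suc i < length p" using p(2) by auto
    then have "adj G w (p ! (i - 1))" "adj G w (p ! Suc i)"
      using path_partition_adj[OF part p(1), of "i - 1"] path_partition_adj[OF part p(1), of i] p(3)
      by (simp_all add: adj_sym)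
    moreover have "distinct p" "set p \<subseteq> T"
      using part p(1) by (auto simp: path_partition_def distinct_concat_iff)
    then have "p ! (i - 1) \<noteq> p ! Suc i" "p ! (i - 1) \<in> T" "p ! Suc i \<in> T"
      using i by (auto simp: nth_eq_iff_index_eq)
    ultimately show False
      using deg \<open>adj G u w\<close> \<open>u \<notin> T\<close> unfolding max_degree_le_two_def by (metis adj_sym)
  qed
  then show ?thesis
  proof
    assume "i = 0"
    then have "hd p = w" using p by (simp add: hd_conv_nth)
    then show ?thesis
      using path_partition_insert_hd[OF wf part[unfolded ps]] assms(4,6) unique by blast
  next
    assume "Suc i = length p"
    then have "hd (rev p) = w"
      using p(3) by (metis hd_rev last_conv_nth diff_Suc_1 length_greater_0_conv zero_less_Suc)
    then show ?thesis
      using path_partition_insert_hd[OF wf path_partition_rev[OF part[unfolded ps]]] assms(4,6) unique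
      by blast
  qed
qed

lemma path_partition_exists:
  assumes wf: "wf_graph G" and deg: "max_degree_le_two G" and "T \<subseteq> verts G"
    and low: "\<And>S. S \<subseteq> T \<Longrightarrow> S \<noteq> {} \<Longrightarrow> \<exists>u\<in>S. at_most_one_neighbour G S u"
  shows "\<exists>ps. path_partition G T ps"
proof -
  have "finite T"
    using wf \<open>T \<subseteq> verts G\<close> by (auto simp: wf_graph_def intro: finite_subset)
  then show ?thesis
    using low
  proof (induction T rule: finite_psubset_induct)
    case (psubset T)
    show ?case
    proof (cases "T = {}")
      case True
      have "{e \<in> edges G. e \<subseteq> {}} = {}"
        using wf by (auto simp: wf_graph_def)
      then have "path_partition G T []"
        using True by (simp add: path_partition_def)
      then show ?thesis ..
    next
      case False
      then obtain u where u: "u \<in> T" "at_most_one_neighbour G T u"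
        using psubset.prems by blast
      then obtain ps where part: "path_partition G (T - {u}) ps"
        using psubset.IH[of "T - {u}"] psubset.prems by blast
      have T: "T = insert u (T - {u})"
        using u(1) by blast
      show ?thesis
      proof (cases "\<exists>w\<in>T - {u}. adj G u w")
        case True
        then obtain w where "w \<in> T - {u}" "adj G u w" by blast
        moreover have "\<forall>w'\<in>T - {u}. adj G u w' \<longrightarrow> w' = w"
          using u(2) calculation unfolding at_most_one_neighbour_def by blast
        ultimately show ?thesis
          using path_partition_insert_leaf[OF wf deg part] T by (metis Diff_iff insertI1)
      next
        case False
        then show ?thesis
          using path_partition_insert_isolated[OF wf part] T by (metis Diff_iff insertI1)
      qed
    qed
  qed
qed

lemma is_linear_forestI:
  assumes "wf_graph G" "path_partition G (verts G) ps"
  shows "is_linear_forest G"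
proof -
  have "{e \<in> edges G. e \<subseteq> verts G} = edges G"
    using assms(1) by (auto simp: wf_graph_def)
  then show ?thesis
    using assms(2) unfolding is_linear_forest_def path_partition_def path_edges_def
    by (intro exI[of _ ps]) simp
qed

lemma path_partition_hd_adj_outside:
  assumes wf: "wf_graph G" and part: "path_partition G (verts G - {x}) ps" and "q \<in> set ps"
    and "adj G (hd q) y" "adj G (hd q) z" "y \<noteq> z"
  shows "1 < length q \<and> adj G (hd q) x"
proof -
  have "q \<noteq> []"
    using part \<open>q \<in> set ps\<close> by (simp add: path_partition_def)
  have "w = x \<or> (1 < length q \<and> w = q ! 1)" if "adj G (hd q) w" for w
  proof (cases "w = x")
    case False
    then have "w \<in> verts G - {x}"
      using adj_in_verts[OF wf that] by blast
    then show ?thesis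
      using path_partition_neighbour[OF part \<open>q \<in> set ps\<close>, of 0 w] that \<open>q \<noteq> []\<close>
      by (simp add: hd_conv_nth)
  qed simp
  then show ?thesis
    using assms(4-6) by metis
qed

lemma path_partition_ends_adj_outside:
  assumes wf: "wf_graph G" and part: "path_partition G (verts G - {x}) ps" and "q \<in> set ps"
    and two: "\<forall>u\<in>verts G. \<exists>y z. adj G u y \<and> adj G u z \<and> y \<noteq> z"
  shows "1 < length q" "adj G x (hd q)" "adj G x (last q)"
proof -
  obtain xs ys where ps: "ps = xs @ q # ys"
    using \<open>q \<in> set ps\<close> by (meson split_list)
  have "q \<noteq> []" "set q \<subseteq> verts G"
    using part \<open>q \<in> set ps\<close> by (auto simp: path_partition_def)
  then have "hd q \<in> verts G" "hd (rev q) \<in> verts G"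
    by (auto simp: hd_rev)
  then show "1 < length q" "adj G x (hd q)" "adj G x (last q)"
    using two path_partition_hd_adj_outside[OF wf part \<open>q \<in> set ps\<close>]
      path_partition_hd_adj_outside[OF wf path_partition_rev[OF part[unfolded ps]], of "rev q"]
    by (auto simp: adj_sym hd_rev)
qed

lemma is_cycle_close_path:
  assumes "distinct (x # p)" "2 \<le> length p" "verts G = insert x (set p)"
    and edges: "edges G = insert {x, hd p} (insert {x, last p} (path_edges p))"
  shows "is_cycle G"
proof -
  define k where "k = Suc (length p)"
  define f where "f i = (x # p) ! i" for i
  have "p \<noteq> []" using assms(2) by auto
  then have f: "f 0 = x" "f (Suc j) = p ! j" "f 1 = hd p" "f (length p) = last p" for j
    by (auto simp: f_def hd_conv_nth last_conv_nth nth_Cons')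
  have wrap: "Suc (length p) mod k = 0" "Suc i < k \<Longrightarrow> Suc i mod k = Suc i" for i
    by (simp_all add: k_def)
  have "bij_betw f {0..<k} (verts G)"
    unfolding f_def k_def using bij_betw_nth[OF assms(1)] assms(3) by (simp add: atLeast0LessThan)
  moreover have "edges G = {{f i, f (Suc i mod k)} | i. i < k}"
  proof (intro set_eqI iffI)
    fix e assume "e \<in> edges G"
    then consider "e = {x, hd p}" | "e = {x, last p}" | j where "e = {p ! j, p ! Suc j}" "Suc j < length p"
      by (auto simp: edges path_edges_def)
    then show "e \<in> {{f i, f (Suc i mod k)} | i. i < k}"
    proof cases
      case 1
      then show ?thesis
        using assms(2) \<open>p \<noteq> []\<close> f wrap(2)[of 0] by (intro CollectI exI[of _ 0]) (simp add: k_def)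
    next
      case 2
      then show ?thesis
        using f wrap(1) by (intro CollectI exI[of _ "length p"]) (auto simp: k_def)
    next
      case 3
      then show ?thesis
        using f wrap(2)[of "Suc j"] by (intro CollectI exI[of _ "Suc j"]) (simp add: k_def)
    qed
  next
    fix e assume "e \<in> {{f i, f (Suc i mod k)} | i. i < k}"
    then obtain i where i: "e = {f i, f (Suc i mod k)}" "i < k" by blast
    then consider "i = 0" | j where "i = Suc j" "Suc j < length p" | "i = length p"
      unfolding k_def by (metis less_Suc_eq not0_implies_Suc)
    then show "e \<in> edges G"
    proof cases
      case 1
      then show ?thesis
        using i assms(2) \<open>p \<noteq> []\<close> f wrap(2)[of 0] by (simp add: edges k_def)
    next
      case 2
      then show ?thesis
        using i f wrap(2)[of "Suc j"] by (auto simp: edges path_edges_def k_def)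
    next
      case 3
      then show ?thesis
        using i f wrap(1) by (simp add: edges insert_commute)
    qed
  qed
  ultimately show ?thesis
    unfolding is_cycle_def using assms(2) by (intro exI[of _ k] exI[of _ f]) (simp add: k_def)
qed

lemma path_partition_two_regular_is_cycle:
  assumes wf: "wf_graph G" and deg: "max_degree_le_two G"
    and two: "\<forall>u\<in>verts G. \<exists>y z. adj G u y \<and> adj G u z \<and> y \<noteq> z"
    and "x \<in> verts G" and part: "path_partition G (verts G - {x}) ps"
  shows "is_cycle G"
proof -
  let ?T = "verts G - {x}"
  note ends = path_partition_ends_adj_outside[OF wf part _ two]
  obtain y where "adj G x y"
    using two \<open>x \<in> verts G\<close> by blast
  then have "y \<in> set (concat ps)"
    using part adj_in_verts[OF wf] adj_irrefl[OF wf] by (auto simp: path_partition_def)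
  then obtain p where p: "p \<in> set ps" by auto
  have dist: "distinct (concat ps)"
    using part by (simp add: path_partition_def)
  then have "distinct p" using p by (simp add: distinct_concat_iff)
  moreover have "p \<noteq> []" using ends(1)[OF p] by auto
  ultimately have "hd p \<noteq> last p"
    using ends(1)[OF p] by (simp add: hd_conv_nth last_conv_nth nth_eq_iff_index_eq)
  then have x_nbrs: "w = hd p \<or> w = last p" if "adj G x w" for w
    using deg ends(2,3)[OF p] that unfolding max_degree_le_two_def by blast
  have p_ends: "hd p \<in> set p" "last p \<in> set p"
    using \<open>p \<noteq> []\<close> by simp_all
  have "q = p" if "q \<in> set ps" for q
  proof -
    have "q \<noteq> []" using part that by (simp add: path_partition_def)
    then have "hd q \<in> set q \<inter> set p"
      using x_nbrs[OF ends(2)[OF that]] p_ends by auto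
    then have "set q \<inter> set p \<noteq> {}" by blast
    then show "q = p"
      using dist p that by (auto simp: distinct_concat_iff)
  qed
  then have "set ps = {p}" using p by blast
  then have T: "?T = set p" and within_T: "{e \<in> edges G. e \<subseteq> ?T} = path_edges p"
    using part by (auto simp: path_partition_def)
  have x_edges: "{{x, w} | w. w \<in> ?T \<and> adj G x w} = {{x, hd p}, {x, last p}}"
  proof (intro equalityI subsetI)
    fix e assume "e \<in> {{x, w} | w. w \<in> ?T \<and> adj G x w}"
    then obtain w where "e = {x, w}" "adj G x w" by blast
    then show "e \<in> {{x, hd p}, {x, last p}}" using x_nbrs by blast
  next
    fix e assume "e \<in> {{x, hd p}, {x, last p}}"
    then show "e \<in> {{x, w} | w. w \<in> ?T \<and> adj G x w}"
      using ends(2,3)[OF p] p_ends T by blast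
  qed
  have "edges G = {e \<in> edges G. e \<subseteq> insert x ?T}"
    using wf \<open>x \<in> verts G\<close> by (auto simp: wf_graph_def)
  also have "\<dots> = {e \<in> edges G. e \<subseteq> ?T} \<union> {{x, w} | w. w \<in> ?T \<and> adj G x w}"
    by (rule edges_within_insert[OF wf])
  also have "\<dots> = insert {x, hd p} (insert {x, last p} (path_edges p))"
    unfolding within_T x_edges by auto
  finally have "edges G = insert {x, hd p} (insert {x, last p} (path_edges p))" .
  moreover have "distinct (x # p)" using \<open>distinct p\<close> T by auto
  moreover have "verts G = insert x (set p)"
    using T \<open>x \<in> verts G\<close> by blast
  moreover have "2 \<le> length p" using ends(1)[OF p] by simp
  ultimately show ?thesis
    by (intro is_cycle_close_path)
qed

lemma minimal_obstruction_max_degree_le_two: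
  assumes mo: "minimal_obstruction (path_graph n) G" and deg: "max_degree_le_two G"
  shows "is_cycle G \<or> is_linear_forest G"
proof -
  have wf: "wf_graph G" by (rule minimal_obstruction_path_graphD(1)[OF mo])
  note low = minimal_obstruction_low_vertex[OF mo deg]
  show ?thesis
  proof (cases "\<exists>u\<in>verts G. at_most_one_neighbour G (verts G) u")
    case True
    then have "\<exists>u\<in>S. at_most_one_neighbour G S u" if "S \<subseteq> verts G" "S \<noteq> {}" for S
      using low that by (cases "S = verts G") auto
    then obtain ps where "path_partition G (verts G) ps"
      using path_partition_exists[OF wf deg] by blast
    then show ?thesis using is_linear_forestI[OF wf] by blast
  next
    case False
    then have two: "\<forall>u\<in>verts G. \<exists>y z. adj G u y \<and> adj G u z \<and> y \<noteq> z"
      unfolding at_most_one_neighbour_def by blast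
    obtain x where "x \<in> verts G"
      using minimal_obstruction_verts_nonempty[OF mo] by blast
    moreover obtain ps where "path_partition G (verts G - {x}) ps"
      using path_partition_exists[OF wf deg, of "verts G - {x}"] low calculation by blast
    ultimately show ?thesis
      using path_partition_two_regular_is_cycle[OF wf deg two] by blast
  qed
qed

theorem lemma2p2:
  fixes n :: nat and G :: "'a graph"
  assumes "n \<ge> 1"
    and "minimal_obstruction (path_graph n) G"
  shows "is_cycle G \<or> is_linear_forest G \<or>
         graph_iso G graph_A \<or> graph_iso G graph_B \<or> graph_iso G graph_E"
proof (cases "max_degree_le_two G")
  case True
  then show ?thesis
    using minimal_obstruction_max_degree_le_two[OF assms(2)] by blast
next
  case False
  then obtain v a b c where "adj G v a" "adj G v b" "adj G v c" "a \<noteq> b" "a \<noteq> c" "b \<noteq> c"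
    by (auto simp: max_degree_le_two_def)
  then show ?thesis
    using minimal_obstruction_claw[OF assms(2)] by blast
qed

end
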